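(* Let $n\ge 2$, $G=Sp(n+1)$, $K=\{\mathrm{diag}(B,q):B\in Sp(n),q\in Sp(1)\}$ and $N=\{\mathrm{diag}(A,q_1,q_2):A\in Sp(n-1),q_1,q_2\in Sp(1)\}$. Let $\Delta G\times K\times N$ act on $G\times G$ by $(g,k,h)\cdot(g_1,g_2)=(gg_1k^{-1},gg_2h^{-1})$. For $g\in G$ let $v(g)\in S^{4n+3}\subseteq\mathbb{H}^{n+1}$ be the last column of $g$, let $v_0(g)\in\mathbb{H}^{n-1}$ be the vector of its first $n-1$ entries, $v_n(g)$ its second-to-last entry and $v_{n+1}(g)$ its last entry. Then $(g_1,g_2)$ and $(h_1,h_2)$ lie in the same orbit if and only if $|v_i(g_2^{-1}g_1)|=|v_i(h_2^{-1}h_1)|$ for each $i\in\{0,n,n+1\}$.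
   Context: $Sp(m)$ denotes the group of $m\times m$ quaternionic unitary matrices; $|\cdot|$ is the standard norm on $\mathbb{H}^k$. *)

theory Defs
  imports "HOL-Analysis.Analysis"
begin

datatype quat = Quat (Re1: real) (Im_i: real) (Im_j: real) (Im_k: real)

instantiation quat :: ring_1
begin
definition "0 = Quat 0 0 0 0"
definition "1 = Quat 1 0 0 0"
definition "x + y = Quat (Re1 x + Re1 y) (Im_i x + Im_i y) (Im_j x + Im_j y) (Im_k x + Im_k y)"
definition "- x = Quat (- Re1 x) (- Im_i x) (- Im_j x) (- Im_k x)"
definition "x - y = Quat (Re1 x - Re1 y) (Im_i x - Im_i y) (Im_j x - Im_j y) (Im_k x - Im_k y)"
definition "x * y = Quat
   (Re1 x * Re1 y - Im_i x * Im_i y - Im_j x * Im_j y - Im_k x * Im_k y)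
   (Re1 x * Im_i y + Im_i x * Re1 y + Im_j x * Im_k y - Im_k x * Im_j y)
   (Re1 x * Im_j y - Im_i x * Im_k y + Im_j x * Re1 y + Im_k x * Im_i y)
   (Re1 x * Im_k y + Im_i x * Im_j y - Im_j x * Im_i y + Im_k x * Re1 y)"
instance
  by standard (simp_all add: zero_quat_def one_quat_def plus_quat_def uminus_quat_def
      minus_quat_def times_quat_def algebra_simps quat.expand)
end

definition qcnj :: "quat \<Rightarrow> quat" where
  "qcnj x = Quat (Re1 x) (- Im_i x) (- Im_j x) (- Im_k x)"

definition qnorm2 :: "quat \<Rightarrow> real" where
  "qnorm2 x = (Re1 x)\<^sup>2 + (Im_i x)\<^sup>2 + (Im_j x)\<^sup>2 + (Im_k x)\<^sup>2"

definition qnorm :: "quat \<Rightarrow> real" where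
  "qnorm x = sqrt (qnorm2 x)"

text \<open>Matrices are functions nat => nat => quat; an m x m matrix has indices 0..m-1
  (0-based) and all entries outside this range are 0.\<close>
type_synonym qmat = "nat \<Rightarrow> nat \<Rightarrow> quat"

definition qmat_mult :: "nat \<Rightarrow> qmat \<Rightarrow> qmat \<Rightarrow> qmat" where
  "qmat_mult m A B = (\<lambda>i j. \<Sum>k<m. A i k * B k j)"

definition qadj :: "qmat \<Rightarrow> qmat" where
  "qadj A = (\<lambda>i j. qcnj (A j i))"

definition qid :: "nat \<Rightarrow> qmat" where
  "qid m = (\<lambda>i j. if i = j \<and> i < m then 1 else 0)"

definition is_qmat :: "nat \<Rightarrow> qmat \<Rightarrow> bool" where
  "is_qmat m A \<longleftrightarrow> (\<forall>i j. (m \<le> i \<or> m \<le> j) \<longrightarrow> A i j = 0)"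

definition Sp :: "nat \<Rightarrow> qmat set" where
  "Sp m = {A. is_qmat m A \<and> qmat_mult m (qadj A) A = qid m \<and> qmat_mult m A (qadj A) = qid m}"

definition K_grp :: "nat \<Rightarrow> qmat set" where
  "K_grp n = {k. \<exists>B q. B \<in> Sp n \<and> qnorm q = 1 \<and>
      k = (\<lambda>i j. if i < n \<and> j < n then B i j else if i = n \<and> j = n then q else 0)}"

definition N_grp :: "nat \<Rightarrow> qmat set" where
  "N_grp n = {h. \<exists>A q1 q2. A \<in> Sp (n - 1) \<and> qnorm q1 = 1 \<and> qnorm q2 = 1 \<and>
      h = (\<lambda>i j. if i < n - 1 \<and> j < n - 1 then A i j
                 else if i = n - 1 \<and> j = n - 1 then q1
                 else if i = n \<and> j = n then q2 else 0)}"

definition same_orbit :: "nat \<Rightarrow> qmat \<times> qmat \<Rightarrow> qmat \<times> qmat \<Rightarrow> bool" where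
  "same_orbit n p p' \<longleftrightarrow> (\<exists>g\<in>Sp (n+1). \<exists>k\<in>K_grp n. \<exists>h\<in>N_grp n.
      fst p' = qmat_mult (n+1) (qmat_mult (n+1) g (fst p)) (qadj k) \<and>
      snd p' = qmat_mult (n+1) (qmat_mult (n+1) g (snd p)) (qadj h))"

text \<open>Norms of the pieces of the last column v(g) (index n) of g in Sp(n+1):
  v_0(g) = first n-1 entries, v_n(g) = second-to-last entry, v_{n+1}(g) = last entry.\<close>
definition v0_norm :: "nat \<Rightarrow> qmat \<Rightarrow> real" where
  "v0_norm n g = sqrt (\<Sum>i<n - 1. qnorm2 (g i n))"

definition vn_norm :: "nat \<Rightarrow> qmat \<Rightarrow> real" where
  "vn_norm n g = qnorm (g (n - 1) n)"

definition vlast_norm :: "nat \<Rightarrow> qmat \<Rightarrow> real" where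
  "vlast_norm n g = qnorm (g n n)"

end

theory Submission
  imports Defs
begin

text \<open>Put x = g2^-1 g1 and y = h2^-1 h1. The action sends x to h x k^-1, and every
  h x k^-1 arises this way, so the orbits correspond to the double cosets N x K.
  Right multiplication by k = diag(B,q) multiplies the last column v(x) on the right by the
  unit q^-1, and left multiplication by h = diag(A,q1,q2) acts on the three blocks of v(x)
  by A, q1 and q2; hence the three norms are invariants. Conversely Sp(m) is transitive on
  the spheres of H^m (a unit scalar followed by a quaternionic Householder reflection), so
  if the norms agree some h in N maps v(x) to v(y); then y^-1 h x fixes the last basis
  vector, which forces it to lie in K.\<close>

section \<open>Quaternions\<close>

definition quat_of_real :: "real \<Rightarrow> quat" where
  "quat_of_real r = Quat r 0 0 0"

lemmas quat_defs = zero_quat_def one_quat_def plus_quat_def uminus_quat_def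
  minus_quat_def times_quat_def qcnj_def quat_of_real_def qnorm2_def

lemma qcnj_mult: "qcnj (a * b) = qcnj b * qcnj a"
  by (cases a; cases b; simp add: quat_defs algebra_simps)

lemma qcnj_add: "qcnj (a + b) = qcnj a + qcnj b"
  by (cases a; cases b; simp add: quat_defs)

lemma qcnj_diff: "qcnj (a - b) = qcnj a - qcnj b"
  by (cases a; cases b; simp add: quat_defs)

lemma qcnj_0 [simp]: "qcnj 0 = 0"
  by (simp add: quat_defs)

lemma qcnj_1 [simp]: "qcnj 1 = 1"
  by (simp add: quat_defs)

lemma qcnj_qcnj [simp]: "qcnj (qcnj a) = a"
  by (cases a; simp add: quat_defs)

lemma qcnj_quat_of_real [simp]: "qcnj (quat_of_real r) = quat_of_real r"
  by (simp add: quat_defs)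

lemma qcnj_sum: "qcnj (\<Sum>i\<in>S. f i) = (\<Sum>i\<in>S. qcnj (f i))"
  by (induction S rule: infinite_finite_induct) (auto simp: qcnj_add)

lemma quat_of_real_commute: "quat_of_real r * a = a * quat_of_real r"
  by (cases a; simp add: quat_defs)

lemma quat_of_real_mult: "quat_of_real (r * s) = quat_of_real r * quat_of_real s"
  by (simp add: quat_defs)

lemma quat_of_real_add: "quat_of_real (r + s) = quat_of_real r + quat_of_real s"
  by (simp add: quat_defs)

lemma quat_of_real_diff: "quat_of_real (r - s) = quat_of_real r - quat_of_real s"
  by (simp add: quat_defs)

lemma quat_of_real_0 [simp]: "quat_of_real 0 = 0"
  by (simp add: quat_defs)

lemma quat_of_real_1 [simp]: "quat_of_real 1 = 1"
  by (simp add: quat_defs)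

lemma quat_of_real_sum: "quat_of_real (\<Sum>i\<in>S. f i) = (\<Sum>i\<in>S. quat_of_real (f i))"
  by (induction S rule: infinite_finite_induct) (auto simp: quat_of_real_add)

lemma quat_of_real_inject: "quat_of_real r = quat_of_real s \<longleftrightarrow> r = s"
  by (simp add: quat_defs)

text \<open>A rewrite system moving real scalars to the front of a product and merging them.\<close>

lemma quat_of_real_right: "NO_MATCH (quat_of_real s) a \<Longrightarrow> a * quat_of_real r = quat_of_real r * a"
  by (simp add: quat_of_real_commute)

lemma quat_of_real_left_commute:
  "NO_MATCH (quat_of_real s) a \<Longrightarrow> a * (quat_of_real r * b) = quat_of_real r * (a * b)"
  by (metis mult.assoc quat_of_real_commute)

lemma quat_of_real_mult_assoc: "quat_of_real r * (quat_of_real s * b) = quat_of_real (r * s) * b"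
  by (simp add: quat_of_real_mult mult.assoc)

lemmas quat_of_real_normalize = mult.assoc quat_of_real_right quat_of_real_left_commute
  quat_of_real_mult[symmetric] quat_of_real_mult_assoc

lemma qcnj_mult_self: "qcnj a * a = quat_of_real (qnorm2 a)"
  by (cases a; simp add: quat_defs algebra_simps power2_eq_square)

lemma mult_qcnj_self: "a * qcnj a = quat_of_real (qnorm2 a)"
  by (cases a; simp add: quat_defs algebra_simps power2_eq_square)

lemma qnorm2_mult: "qnorm2 (a * b) = qnorm2 a * qnorm2 b"
  by (cases a; cases b; simp add: quat_defs algebra_simps power2_eq_square)

lemma qnorm2_nonneg: "qnorm2 a \<ge> 0"
  by (simp add: qnorm2_def)

lemma qnorm2_eq_0_iff: "qnorm2 a = 0 \<longleftrightarrow> a = 0"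
  by (cases a; simp add: quat_defs add_nonneg_eq_0_iff)

lemma qnorm2_pos: "a \<noteq> 0 \<Longrightarrow> qnorm2 a > 0"
  using qnorm2_eq_0_iff qnorm2_nonneg by (metis less_eq_real_def)

lemma qnorm2_quat_of_real: "qnorm2 (quat_of_real r) = r\<^sup>2"
  by (simp add: quat_defs)

lemma qnorm2_qcnj [simp]: "qnorm2 (qcnj a) = qnorm2 a"
  by (simp add: quat_defs)

lemma qnorm2_1 [simp]: "qnorm2 1 = 1"
  by (simp add: quat_defs)

lemma qnorm_eq_1_iff: "qnorm q = 1 \<longleftrightarrow> qnorm2 q = 1"
  by (simp add: qnorm_def)

lemma qnorm_eq_iff_qnorm2_eq: "qnorm a = qnorm b \<longleftrightarrow> qnorm2 a = qnorm2 b"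
  by (simp add: qnorm_def qnorm2_nonneg)

lemma unit_quat_mult_transitive:
  assumes "qnorm a = qnorm b"
  obtains q where "qnorm2 q = 1" "q * a = b"
proof (cases "a = 0")
  case True
  then have "b = 0"
    using assms by (metis qnorm_eq_iff_qnorm2_eq qnorm2_eq_0_iff)
  with True show ?thesis
    using that[of 1] by simp
next
  case False
  have pos: "qnorm2 a > 0"
    using False by (rule qnorm2_pos)
  define q where "q = b * qcnj a * quat_of_real (1 / qnorm2 a)"
  have "q * a = b * (qcnj a * a) * quat_of_real (1 / qnorm2 a)"
    by (simp add: q_def mult.assoc quat_of_real_commute)
  also have "\<dots> = b"
    using pos by (simp add: qcnj_mult_self mult.assoc quat_of_real_mult[symmetric])
  finally have "q * a = b" .
  moreover have "qnorm2 q = 1"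
    using pos assms
    by (simp add: q_def qnorm2_mult qnorm2_quat_of_real power2_eq_square qnorm_eq_iff_qnorm2_eq)
  ultimately show ?thesis
    using that by blast
qed

section \<open>Quaternionic matrices and the group Sp(m)\<close>

lemma qmat_mult_assoc:
  "qmat_mult m (qmat_mult m A B) C = qmat_mult m A (qmat_mult m B C)"
  unfolding qmat_mult_def
  by (rule ext)+ (simp add: sum_distrib_left sum_distrib_right mult.assoc, subst sum.swap, rule refl)

lemma qadj_qmat_mult: "qadj (qmat_mult m A B) = qmat_mult m (qadj B) (qadj A)"
  unfolding qmat_mult_def qadj_def by (rule ext)+ (simp add: qcnj_sum qcnj_mult)

lemma qadj_qadj [simp]: "qadj (qadj A) = A"
  by (simp add: qadj_def)

lemma qadj_qid [simp]: "qadj (qid m) = qid m"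
  by (rule ext)+ (simp add: qadj_def qid_def)

lemma sum_qid_mult_left: "(\<Sum>k<m. qid m i k * f k) = (if i < m then f i else 0)"
  unfolding qid_def
  by (simp add: if_distrib[where f = "\<lambda>x. x * _"] sum.delta conj_commute cong: if_cong)

lemma sum_mult_qid_right: "(\<Sum>k<m. f k * qid m k j) = (if j < m then f j else 0)"
proof -
  have "(\<Sum>k<m. f k * qid m k j) = (\<Sum>k<m. if k = j then (if j < m then f j else 0) else 0)"
    by (rule sum.cong) (auto simp: qid_def)
  then show ?thesis
    by (simp add: sum.delta')
qed

lemma qmat_mult_qid_left: "is_qmat m B \<Longrightarrow> qmat_mult m (qid m) B = B"
  unfolding qmat_mult_def by (rule ext)+ (auto simp: sum_qid_mult_left is_qmat_def)

lemma qmat_mult_qid_right: "is_qmat m B \<Longrightarrow> qmat_mult m B (qid m) = B"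
  unfolding qmat_mult_def by (rule ext)+ (auto simp: sum_mult_qid_right is_qmat_def)

lemma qmat_mult_qid_middle: "qmat_mult m A (qmat_mult m (qid m) B) = qmat_mult m A B"
  unfolding qmat_mult_def by (rule ext)+ (rule sum.cong, simp_all add: sum_qid_mult_left)

lemma is_qmat_qid: "is_qmat m (qid m)"
  by (simp add: is_qmat_def qid_def)

lemma is_qmat_qmat_mult: "is_qmat m A \<Longrightarrow> is_qmat m B \<Longrightarrow> is_qmat m (qmat_mult m A B)"
  unfolding qmat_mult_def is_qmat_def by auto

lemma is_qmat_qadj: "is_qmat m A \<Longrightarrow> is_qmat m (qadj A)"
  unfolding qadj_def is_qmat_def by auto

lemma Sp_is_qmat: "A \<in> Sp m \<Longrightarrow> is_qmat m A"
  by (simp add: Sp_def)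

lemma qid_in_Sp: "qid m \<in> Sp m"
  by (simp add: Sp_def is_qmat_qid qmat_mult_qid_left)

lemma qadj_in_Sp: "A \<in> Sp m \<Longrightarrow> qadj A \<in> Sp m"
  by (simp add: Sp_def is_qmat_qadj)

lemma qmat_mult_in_Sp: "A \<in> Sp m \<Longrightarrow> B \<in> Sp m \<Longrightarrow> qmat_mult m A B \<in> Sp m"
  unfolding Sp_def
  by (simp add: is_qmat_qmat_mult qadj_qmat_mult qmat_mult_assoc)
    (simp add: qmat_mult_assoc[symmetric] qmat_mult_qid_middle,
     simp add: qmat_mult_assoc qmat_mult_qid_middle)

lemma Sp_qadj_mult_cancel:
  "A \<in> Sp m \<Longrightarrow> is_qmat m B \<Longrightarrow> qmat_mult m (qadj A) (qmat_mult m A B) = B"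
  by (simp add: Sp_def qmat_mult_assoc[symmetric] qmat_mult_qid_left)

lemma Sp_mult_qadj_cancel:
  "A \<in> Sp m \<Longrightarrow> is_qmat m B \<Longrightarrow> qmat_mult m A (qmat_mult m (qadj A) B) = B"
  by (simp add: Sp_def qmat_mult_assoc[symmetric] qmat_mult_qid_left)

section \<open>Sp(m) acts transitively on spheres\<close>

definition qmat_vec :: "nat \<Rightarrow> qmat \<Rightarrow> (nat \<Rightarrow> quat) \<Rightarrow> nat \<Rightarrow> quat" where
  "qmat_vec m A u = (\<lambda>i. \<Sum>l<m. A i l * u l)"

definition qinner :: "nat \<Rightarrow> (nat \<Rightarrow> quat) \<Rightarrow> (nat \<Rightarrow> quat) \<Rightarrow> quat" where
  "qinner m u w = (\<Sum>l<m. qcnj (u l) * w l)"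

definition qvec_norm2 :: "nat \<Rightarrow> (nat \<Rightarrow> quat) \<Rightarrow> real" where
  "qvec_norm2 m u = (\<Sum>l<m. qnorm2 (u l))"

lemma qmat_vec_qmat_mult: "qmat_vec m (qmat_mult m A B) u = qmat_vec m A (qmat_vec m B u)"
  unfolding qmat_mult_def qmat_vec_def
  by (rule ext) (simp add: sum_distrib_left sum_distrib_right mult.assoc, subst sum.swap, rule refl)

lemma qmat_vec_cong: "(\<And>l. l < m \<Longrightarrow> u l = w l) \<Longrightarrow> qmat_vec m A u = qmat_vec m A w"
  unfolding qmat_vec_def by (rule ext) (rule sum.cong, auto)

lemma qmat_vec_qid: "i < m \<Longrightarrow> qmat_vec m (qid m) u i = u i"
  unfolding qmat_vec_def by (simp add: sum_qid_mult_left)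

lemma qinner_qmat_vec: "qinner m (qmat_vec m A u) w = qinner m u (qmat_vec m (qadj A) w)"
  unfolding qinner_def qmat_vec_def qadj_def
  by (simp add: qcnj_sum qcnj_mult sum_distrib_left sum_distrib_right mult.assoc,
      subst sum.swap, rule refl)

lemma qinner_self: "qinner m u u = quat_of_real (qvec_norm2 m u)"
  unfolding qinner_def qvec_norm2_def by (simp add: qcnj_mult_self quat_of_real_sum)

lemma qinner_commute: "qinner m u w = qcnj (qinner m w u)"
  unfolding qinner_def by (simp add: qcnj_sum qcnj_mult)

lemma qinner_cong: "(\<And>l. l < m \<Longrightarrow> w l = w' l) \<Longrightarrow> qinner m u w = qinner m u w'"
  unfolding qinner_def by (rule sum.cong, auto)

lemma qvec_norm2_nonneg: "qvec_norm2 m u \<ge> 0"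
  unfolding qvec_norm2_def by (simp add: sum_nonneg qnorm2_nonneg)

lemma qvec_norm2_eq_0: "qvec_norm2 m u = 0 \<Longrightarrow> l < m \<Longrightarrow> u l = 0"
  unfolding qvec_norm2_def using sum_nonneg_eq_0_iff[of "{..<m}" "\<lambda>l. qnorm2 (u l)"]
  by (simp add: qnorm2_nonneg qnorm2_eq_0_iff)

lemma qvec_norm2_Sp: "A \<in> Sp m \<Longrightarrow> qvec_norm2 m (qmat_vec m A u) = qvec_norm2 m u"
proof -
  assume A: "A \<in> Sp m"
  have "quat_of_real (qvec_norm2 m (qmat_vec m A u)) = qinner m (qmat_vec m A u) (qmat_vec m A u)"
    by (simp add: qinner_self)
  also have "\<dots> = qinner m u (qmat_vec m (qmat_mult m (qadj A) A) u)"
    by (simp add: qinner_qmat_vec qmat_vec_qmat_mult)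
  also have "\<dots> = qinner m u u"
    using A by (intro qinner_cong) (simp add: Sp_def qmat_vec_qid)
  finally show ?thesis
    by (simp add: qinner_self quat_of_real_inject)
qed

text \<open>The quaternionic Householder reflection I - 2 v v^* / |v|^2; for v = 0 it is the
  identity, since 2 / 0 = 0.\<close>

definition householder :: "nat \<Rightarrow> (nat \<Rightarrow> quat) \<Rightarrow> qmat" where
  "householder m v = (\<lambda>i j. if i < m \<and> j < m
     then qid m i j - quat_of_real (2 / qvec_norm2 m v) * v i * qcnj (v j) else 0)"

lemma qadj_householder: "qadj (householder m v) = householder m v"
  unfolding qadj_def householder_def
  by (rule ext)+ (auto simp: qcnj_diff qcnj_mult qid_def quat_of_real_normalize)

lemma householder_entry_product:
  "(d1 - quat_of_real c * a * qcnj b) * (d2 - quat_of_real c * b * e) =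
   d1 * d2 - d1 * (quat_of_real c * b * e) - quat_of_real c * a * qcnj b * d2
   + quat_of_real (c * c) * a * (qcnj b * b) * e"
proof -
  have "quat_of_real c * a * qcnj b * (quat_of_real c * b * e)
      = quat_of_real (c * c) * a * (qcnj b * b) * e"
    by (simp add: quat_of_real_normalize)
  moreover have "\<And>X Y d1 d2 :: quat. (d1 - X) * (d2 - Y) = d1 * d2 - d1 * Y - X * d2 + X * Y"
    by (simp add: algebra_simps)
  ultimately show ?thesis
    by simp
qed

lemma householder_square: "qmat_mult m (householder m p) (householder m p) = qid m"
proof (rule ext)+
  fix i j
  define c where "c = 2 / qvec_norm2 m p"
  show "qmat_mult m (householder m p) (householder m p) i j = qid m i j"
  proof (cases "i < m \<and> j < m")
    case False
    then show ?thesis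
      by (auto simp: qmat_mult_def householder_def qid_def)
  next
    case True
    have "qmat_mult m (householder m p) (householder m p) i j
        = (\<Sum>l<m. qid m i l * qid m l j - qid m i l * (quat_of_real c * p l * qcnj (p j))
            - quat_of_real c * p i * qcnj (p l) * qid m l j
            + quat_of_real (c * c) * p i * (qcnj (p l) * p l) * qcnj (p j))"
      unfolding qmat_mult_def using True
      by (intro sum.cong) (simp_all add: householder_def householder_entry_product c_def)
    also have "\<dots> = qid m i j - quat_of_real c * p i * qcnj (p j) - quat_of_real c * p i * qcnj (p j)
        + quat_of_real (c * c) * p i * qinner m p p * qcnj (p j)"
      using True
      by (simp add: sum.distrib sum_subtractf sum_qid_mult_left sum_mult_qid_right
          qinner_def sum_distrib_left sum_distrib_right)
    also have "\<dots> = qid m i j - quat_of_real c * p i * qcnj (p j) - quat_of_real c * p i * qcnj (p j)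
        + quat_of_real (c * c * qvec_norm2 m p) * p i * qcnj (p j)"
      by (simp add: qinner_self quat_of_real_normalize)
    also have "c * c * qvec_norm2 m p = c + c"
      by (simp add: c_def)
    also have "qid m i j - quat_of_real c * p i * qcnj (p j) - quat_of_real c * p i * qcnj (p j)
        + quat_of_real (c + c) * p i * qcnj (p j) = qid m i j"
      by (simp only: quat_of_real_add distrib_right) (simp add: algebra_simps)
    finally show ?thesis .
  qed
qed

lemma householder_in_Sp: "householder m p \<in> Sp m"
  unfolding Sp_def
  by (simp add: qadj_householder householder_square) (simp add: is_qmat_def householder_def)

lemma householder_maps:
  assumes norm: "qvec_norm2 m u = qvec_norm2 m t"
    and real: "qinner m t u = quat_of_real r"
    and i: "i < m"
  shows "qmat_vec m (householder m (\<lambda>l. u l - t l)) u i = t i"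
proof -
  define p where "p = (\<lambda>l. u l - t l)"
  define S where "S = qvec_norm2 m u"
  define c where "c = 2 / qvec_norm2 m p"
  have "qinner m p u = qinner m u u - qinner m t u"
    by (simp add: p_def qinner_def qcnj_diff ring_distribs sum_subtractf)
  then have inner_pu: "qinner m p u = quat_of_real (S - r)"
    by (simp add: qinner_self real S_def quat_of_real_diff)
  have "qinner m p p = qinner m u u - qinner m u t - qinner m t u + qinner m t t"
    by (simp add: p_def qinner_def qcnj_diff ring_distribs sum_subtractf sum.distrib algebra_simps)
  also have "\<dots> = quat_of_real (2 * S - 2 * r)"
    by (simp add: qinner_self S_def norm qinner_commute[of m u t] real quat_defs algebra_simps)
  finally have norm_p: "qvec_norm2 m p = 2 * S - 2 * r"
    by (simp add: qinner_self quat_of_real_inject)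
  have "qmat_vec m (householder m p) u i
      = (\<Sum>l<m. qid m i l * u l - quat_of_real c * p i * (qcnj (p l) * u l))"
    unfolding qmat_vec_def using i
    by (intro sum.cong) (simp_all add: householder_def c_def ring_distribs mult.assoc)
  also have "\<dots> = u i - quat_of_real c * p i * qinner m p u"
    using i by (simp add: sum_subtractf sum_qid_mult_left qinner_def sum_distrib_left)
  also have "\<dots> = u i - quat_of_real (c * (S - r)) * p i"
    by (simp add: inner_pu quat_of_real_normalize)
  also have "\<dots> = t i"
  proof (cases "qvec_norm2 m p = 0")
    case True
    then show ?thesis
      using qvec_norm2_eq_0 i by (fastforce simp: p_def)
  next
    case False
    then have "c * (S - r) = 1"
      using norm_p by (simp add: c_def)
    then show ?thesis
      by (simp add: p_def)
  qed
  finally show ?thesis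
    by (simp add: p_def)
qed

definition qdiag :: "nat \<Rightarrow> (nat \<Rightarrow> quat) \<Rightarrow> qmat" where
  "qdiag m d = (\<lambda>i j. if i = j \<and> i < m then d i else 0)"

lemma qadj_qdiag: "qadj (qdiag m d) = qdiag m (\<lambda>i. qcnj (d i))"
  by (rule ext)+ (simp add: qadj_def qdiag_def)

lemma qmat_mult_qdiag: "qmat_mult m (qdiag m d) (qdiag m e) = qdiag m (\<lambda>i. d i * e i)"
proof (rule ext)+
  fix i j
  have "qmat_mult m (qdiag m d) (qdiag m e) i j
      = (\<Sum>l<m. if l = i then (if i = j \<and> i < m then d i * e i else 0) else 0)"
    unfolding qmat_mult_def qdiag_def by (rule sum.cong) auto
  then show "qmat_mult m (qdiag m d) (qdiag m e) i j = qdiag m (\<lambda>i. d i * e i) i j"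
    by (simp add: qdiag_def)
qed

lemma qdiag_in_Sp:
  assumes "\<And>i. i < m \<Longrightarrow> qnorm2 (d i) = 1"
  shows "qdiag m d \<in> Sp m"
proof -
  have "qdiag m (\<lambda>i. qcnj (d i) * d i) = qid m" "qdiag m (\<lambda>i. d i * qcnj (d i)) = qid m"
    using assms by (auto intro!: ext simp: qdiag_def qid_def qcnj_mult_self mult_qcnj_self)
  then show ?thesis
    unfolding Sp_def by (simp add: qadj_qdiag qmat_mult_qdiag) (simp add: is_qmat_def qdiag_def)
qed

lemma qmat_vec_qdiag: "i < m \<Longrightarrow> qmat_vec m (qdiag m d) u i = d i * u i"
proof -
  assume i: "i < m"
  have "qmat_vec m (qdiag m d) u i = (\<Sum>l<m. if l = i then d i * u i else 0)"
    unfolding qmat_vec_def qdiag_def by (rule sum.cong) auto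
  then show ?thesis
    using i by simp
qed

text \<open>First make the leading entry real and nonnegative by a unit scalar; the inner
  product with the target then is real, so a Householder reflection finishes.\<close>

lemma Sp_maps_to_first_axis:
  assumes m: "0 < m"
  obtains M where "M \<in> Sp m"
    "\<And>i. i < m \<Longrightarrow> qmat_vec m M u i = (if i = 0 then quat_of_real (sqrt (qvec_norm2 m u)) else 0)"
proof -
  define a where "a = u 0"
  define c where "c = (if a = 0 then 1 else quat_of_real (1 / sqrt (qnorm2 a)) * qcnj a)"
  have c_unit: "qnorm2 c = 1"
    using qnorm2_pos[of a]
    by (auto simp: c_def qnorm2_mult qnorm2_quat_of_real power_divide)
  have c_a: "c * a = quat_of_real (sqrt (qnorm2 a))"
  proof (cases "a = 0")
    case False
    then have pos: "qnorm2 a > 0"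
      by (rule qnorm2_pos)
    have "c * a = quat_of_real (1 / sqrt (qnorm2 a)) * (qcnj a * a)"
      using False by (simp add: c_def mult.assoc)
    also have "\<dots> = quat_of_real (qnorm2 a / sqrt (qnorm2 a))"
      by (simp add: qcnj_mult_self quat_of_real_mult[symmetric])
    also have "qnorm2 a / sqrt (qnorm2 a) = sqrt (qnorm2 a)"
      using pos by (metis real_div_sqrt less_imp_le)
    finally show ?thesis .
  qed (simp add: c_def quat_defs)
  define D where "D = qdiag m (\<lambda>i. if i = 0 then c else 1)"
  have D: "D \<in> Sp m"
    unfolding D_def by (rule qdiag_in_Sp) (simp add: c_unit)
  define u' where "u' = qmat_vec m D u"
  have u'_0: "u' 0 = quat_of_real (sqrt (qnorm2 a))"
    using m c_a by (simp add: u'_def D_def qmat_vec_qdiag a_def)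
  define R where "R = sqrt (qvec_norm2 m u)"
  define t where "t = (\<lambda>i::nat. if i = 0 then quat_of_real R else 0)"
  have "qvec_norm2 m t = (\<Sum>l<m. if l = 0 then R\<^sup>2 else 0)"
    unfolding qvec_norm2_def t_def by (rule sum.cong) (auto simp: qnorm2_quat_of_real qnorm2_eq_0_iff)
  then have norm_t: "qvec_norm2 m t = qvec_norm2 m u'"
    using m D by (simp add: R_def qvec_norm2_nonneg u'_def qvec_norm2_Sp)
  have "qinner m t u' = (\<Sum>l<m. if l = 0 then quat_of_real R * u' 0 else 0)"
    unfolding qinner_def t_def by (rule sum.cong) auto
  then have inner_t: "qinner m t u' = quat_of_real (R * sqrt (qnorm2 a))"
    using m by (simp add: u'_0 quat_of_real_mult)
  define M where "M = qmat_mult m (householder m (\<lambda>l. u' l - t l)) D"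
  have "M \<in> Sp m"
    by (simp add: M_def qmat_mult_in_Sp householder_in_Sp D)
  moreover have "qmat_vec m M u i = t i" if "i < m" for i
    using householder_maps[OF norm_t[symmetric] inner_t that]
    by (simp add: qmat_vec_qmat_mult M_def u'_def)
  ultimately show ?thesis
    using that by (simp add: t_def R_def)
qed

lemma Sp_transitive_on_spheres:
  assumes norm: "qvec_norm2 m u = qvec_norm2 m w"
  obtains A where "A \<in> Sp m" "\<And>i. i < m \<Longrightarrow> qmat_vec m A u i = w i"
proof (cases "m = 0")
  case True
  then show ?thesis
    using that qid_in_Sp by auto
next
  case False
  then obtain Mu where Mu: "Mu \<in> Sp m"
    "\<And>i. i < m \<Longrightarrow> qmat_vec m Mu u i = (if i = 0 then quat_of_real (sqrt (qvec_norm2 m u)) else 0)"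
    using Sp_maps_to_first_axis by blast
  obtain Mw where Mw: "Mw \<in> Sp m"
    "\<And>i. i < m \<Longrightarrow> qmat_vec m Mw w i = (if i = 0 then quat_of_real (sqrt (qvec_norm2 m w)) else 0)"
    using Sp_maps_to_first_axis False by blast
  have "qmat_vec m (qmat_mult m (qadj Mw) Mu) u i = w i" if i: "i < m" for i
  proof -
    have "qmat_vec m (qmat_mult m (qadj Mw) Mu) u = qmat_vec m (qadj Mw) (qmat_vec m Mw w)"
      unfolding qmat_vec_qmat_mult by (rule qmat_vec_cong) (simp add: Mu Mw norm)
    also have "\<dots> = qmat_vec m (qid m) w"
      using Mw(1) by (simp add: qmat_vec_qmat_mult[symmetric] Sp_def)
    finally show ?thesis
      using i by (simp add: qmat_vec_qid)
  qed
  then show ?thesis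
    using that Mu(1) Mw(1) qadj_in_Sp qmat_mult_in_Sp by blast
qed

section \<open>Block-diagonal matrices and the subgroups K and N\<close>

definition qblock :: "nat \<Rightarrow> qmat \<Rightarrow> quat \<Rightarrow> qmat" where
  "qblock m B q = (\<lambda>i j. if i < m \<and> j < m then B i j else if i = m \<and> j = m then q else 0)"

lemma qadj_qblock: "qadj (qblock m B q) = qblock m (qadj B) (qcnj q)"
  by (rule ext)+ (auto simp: qadj_def qblock_def)

lemma is_qmat_qblock: "is_qmat (Suc m) (qblock m B q)"
  by (auto simp: is_qmat_def qblock_def)

lemma qblock_qid: "qblock m (qid m) 1 = qid (Suc m)"
  by (rule ext)+ (auto simp: qblock_def qid_def)

lemma sum_qblock_mult_left:
  "(\<Sum>l<Suc m. qblock m C q i l * x l)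
     = (if i < m then (\<Sum>l<m. C i l * x l) else if i = m then q * x m else 0)"
proof -
  have "(\<Sum>l<m. qblock m C q i l * x l) = (if i < m then (\<Sum>l<m. C i l * x l) else 0)"
    by (auto simp: qblock_def intro: sum.cong)
  then show ?thesis
    by (simp add: qblock_def)
qed

lemma qmat_mult_qblock:
  "qmat_mult (Suc m) (qblock m B1 q1) (qblock m B2 q2) = qblock m (qmat_mult m B1 B2) (q1 * q2)"
proof (rule ext)+
  fix i j
  have "(\<Sum>l<m. B1 i l * qblock m B2 q2 l j) = (if j < m then (\<Sum>l<m. B1 i l * B2 l j) else 0)"
    by (auto simp: qblock_def intro: sum.cong)
  then show "qmat_mult (Suc m) (qblock m B1 q1) (qblock m B2 q2) i j
      = qblock m (qmat_mult m B1 B2) (q1 * q2) i j"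
    unfolding qmat_mult_def sum_qblock_mult_left by (auto simp: qblock_def qmat_mult_def)
qed

lemma qblock_in_Sp: "B \<in> Sp m \<Longrightarrow> qnorm2 q = 1 \<Longrightarrow> qblock m B q \<in> Sp (Suc m)"
  unfolding Sp_def
  by (simp add: is_qmat_qblock qadj_qblock qmat_mult_qblock qblock_qid qcnj_mult_self mult_qcnj_self)

lemma qblock_eq_qidD: "qblock m C q = qid (Suc m) \<Longrightarrow> is_qmat m C \<Longrightarrow> C = qid m"
  by (rule ext)+ (metis (no_types, lifting) is_qmat_def leI qblock_def qid_def less_SucI)

lemma qblock_in_SpD: "qblock m B q \<in> Sp (Suc m) \<Longrightarrow> is_qmat m B \<Longrightarrow> B \<in> Sp m"
  unfolding Sp_def
  by (auto simp: qadj_qblock qmat_mult_qblock is_qmat_qmat_mult is_qmat_qadj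
      intro: qblock_eq_qidD)

lemma K_grp_iff: "k \<in> K_grp n \<longleftrightarrow> (\<exists>B q. B \<in> Sp n \<and> qnorm2 q = 1 \<and> k = qblock n B q)"
  unfolding K_grp_def qblock_def by (simp add: qnorm_eq_1_iff)

lemma N_grp_iff:
  assumes "n \<ge> 1"
  shows "h \<in> N_grp n \<longleftrightarrow> (\<exists>A q1 q2. A \<in> Sp (n - 1) \<and> qnorm2 q1 = 1 \<and> qnorm2 q2 = 1 \<and>
      h = qblock n (qblock (n - 1) A q1) q2)"
proof -
  have "qblock n (qblock (n - 1) A q1) q2 = (\<lambda>i j. if i < n - 1 \<and> j < n - 1 then A i j
      else if i = n - 1 \<and> j = n - 1 then q1 else if i = n \<and> j = n then q2 else 0)" for A q1 q2
    using assms by (intro ext) (auto simp: qblock_def)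
  then show ?thesis
    unfolding N_grp_def by (simp add: qnorm_eq_1_iff)
qed

lemma K_grp_subset_Sp: "K_grp n \<subseteq> Sp (Suc n)"
  by (auto simp: K_grp_iff qblock_in_Sp)

lemma N_grp_subset_Sp:
  assumes "n \<ge> 1"
  shows "N_grp n \<subseteq> Sp (Suc n)"
proof
  fix h
  assume "h \<in> N_grp n"
  then obtain A q1 q2 where A: "A \<in> Sp (n - 1)" and q: "qnorm2 q1 = 1" "qnorm2 q2 = 1"
    and h: "h = qblock n (qblock (n - 1) A q1) q2"
    using N_grp_iff[OF assms] by blast
  have "qblock (n - 1) A q1 \<in> Sp n"
    using qblock_in_Sp[OF A q(1)] assms by simp
  then show "h \<in> Sp (Suc n)"
    using h q(2) by (simp add: qblock_in_Sp)
qed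

section \<open>The last column under N and K\<close>

lemma last_column_mult_qadj_qblock:
  "qmat_mult (Suc m) z (qadj (qblock m B q)) i m = z i m * qcnj q"
proof -
  have "(\<Sum>l<m. z i l * qadj (qblock m B q) l m) = 0"
    by (rule sum.neutral) (auto simp: qadj_def qblock_def)
  then show ?thesis
    by (simp add: qmat_mult_def qadj_def qblock_def)
qed

lemma qmat_mult_N_block:
  assumes "n \<ge> 1"
  shows "qmat_mult (Suc n) (qblock n (qblock (n - 1) A q1) q2) x i j =
    (if i < n - 1 then (\<Sum>l<n - 1. A i l * x l j) else if i = n - 1 then q1 * x (n - 1) j
     else if i = n then q2 * x n j else 0)"
proof -
  obtain k where k: "n = Suc k"
    using assms by (cases n) auto
  show ?thesis
    unfolding qmat_mult_def sum_qblock_mult_left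
    using sum_qblock_mult_left[of k A q1 i "\<lambda>l. x l j"] k by auto
qed

lemma last_column_norms_N_K_invariant:
  assumes n: "n \<ge> 1" and h: "h \<in> N_grp n" and k: "k \<in> K_grp n"
    and y: "y = qmat_mult (Suc n) (qmat_mult (Suc n) h x) (qadj k)"
  shows "v0_norm n y = v0_norm n x \<and> vn_norm n y = vn_norm n x \<and> vlast_norm n y = vlast_norm n x"
proof -
  obtain A q1 q2 where A: "A \<in> Sp (n - 1)" and q: "qnorm2 q1 = 1" "qnorm2 q2 = 1"
    and h_eq: "h = qblock n (qblock (n - 1) A q1) q2"
    using N_grp_iff[OF n] h by blast
  obtain B q where q0: "qnorm2 q = 1" and k_eq: "k = qblock n B q"
    using K_grp_iff k by blast
  have y_col: "y i n = qmat_mult (Suc n) h x i n * qcnj q" for i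
    unfolding y k_eq by (rule last_column_mult_qadj_qblock)
  note h_col = qmat_mult_N_block[OF n, of A q1 q2 x _ n, folded h_eq]
  have block0: "y i n = qmat_vec (n - 1) A (\<lambda>l. x l n) i * qcnj q" if "i < n - 1" for i
    using that by (simp add: y_col h_col qmat_vec_def)
  have blockn: "y (n - 1) n = q1 * x (n - 1) n * qcnj q"
    by (simp add: y_col h_col mult.assoc)
  have blocklast: "y n n = q2 * x n n * qcnj q"
    using n by (auto simp: y_col h_col mult.assoc)
  have "(\<Sum>i<n - 1. qnorm2 (y i n)) = qvec_norm2 (n - 1) (qmat_vec (n - 1) A (\<lambda>l. x l n))"
    unfolding qvec_norm2_def by (rule sum.cong) (simp_all add: block0 qnorm2_mult q0)
  also have "\<dots> = (\<Sum>i<n - 1. qnorm2 (x i n))"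
    using qvec_norm2_Sp[OF A] by (simp add: qvec_norm2_def)
  finally show ?thesis
    unfolding v0_norm_def vn_norm_def vlast_norm_def qnorm_def blockn blocklast
    by (simp add: qnorm2_mult q q0)
qed

lemma N_transitive_on_last_column:
  assumes n: "n \<ge> 1"
    and norm0: "v0_norm n x = v0_norm n y" and normn: "vn_norm n x = vn_norm n y"
    and normlast: "vlast_norm n x = vlast_norm n y"
  obtains h where "h \<in> N_grp n" "\<And>i. i < Suc n \<Longrightarrow> qmat_mult (Suc n) h x i n = y i n"
proof -
  have "qvec_norm2 (n - 1) (\<lambda>l. x l n) = qvec_norm2 (n - 1) (\<lambda>l. y l n)"
    using norm0 by (simp add: v0_norm_def qvec_norm2_def sum_nonneg qnorm2_nonneg)
  then obtain A where A: "A \<in> Sp (n - 1)"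
    and A_maps: "\<And>i. i < n - 1 \<Longrightarrow> qmat_vec (n - 1) A (\<lambda>l. x l n) i = y i n"
    using Sp_transitive_on_spheres by metis
  obtain q1 where q1: "qnorm2 q1 = 1" "q1 * x (n - 1) n = y (n - 1) n"
    using unit_quat_mult_transitive normn unfolding vn_norm_def by metis
  obtain q2 where q2: "qnorm2 q2 = 1" "q2 * x n n = y n n"
    using unit_quat_mult_transitive normlast unfolding vlast_norm_def by metis
  define h where "h = qblock n (qblock (n - 1) A q1) q2"
  have "h \<in> N_grp n"
    unfolding h_def N_grp_iff[OF n] using A q1 q2 by blast
  moreover have "qmat_mult (Suc n) h x i n = y i n" if i: "i < Suc n" for i
  proof -
    consider "i < n - 1" | "i = n - 1" | "i = n"
      using i n by linarith
    then show ?thesis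
      using qmat_mult_N_block[OF n, of A q1 q2 x i n, folded h_def] A_maps q1 q2 n
      by cases (auto simp: qmat_vec_def)
  qed
  ultimately show ?thesis
    using that by blast
qed

lemma Sp_fixing_last_basis_vector_in_K:
  assumes k: "k \<in> Sp (Suc n)" and col: "\<And>i. k i n = qid (Suc n) i n"
  shows "k \<in> K_grp n"
proof -
  have row: "k n j = qid (Suc n) n j" for j
  proof -
    have "qcnj (k n j) = (\<Sum>l<Suc n. qcnj (k l j) * qid (Suc n) l n)"
      by (simp add: sum_mult_qid_right)
    also have "\<dots> = qmat_mult (Suc n) (qadj k) k j n"
      unfolding qmat_mult_def qadj_def by (simp add: col)
    also have "\<dots> = qid (Suc n) j n"
      using k by (simp add: Sp_def)
    finally have "k n j = qcnj (qid (Suc n) j n)"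
      by (metis qcnj_qcnj)
    then show ?thesis
      by (simp add: qid_def)
  qed
  define B where "B = (\<lambda>i j. if i < n \<and> j < n then k i j else 0)"
  have "k i j = qblock n B 1 i j" for i j
  proof -
    consider "i < n \<and> j < n" | "i = n" | "j = n" | "Suc n \<le> i \<or> Suc n \<le> j"
      by linarith
    then show ?thesis
      using Sp_is_qmat[OF k] row[of j] col[of i]
      by cases (auto simp: qblock_def B_def is_qmat_def qid_def)
  qed
  then have "k = qblock n B 1"
    by blast
  moreover have "B \<in> Sp n"
  proof (rule qblock_in_SpD)
    show "qblock n B 1 \<in> Sp (Suc n)"
      using k \<open>k = qblock n B 1\<close> by simp
    show "is_qmat n B"
      by (simp add: is_qmat_def B_def)
  qed
  ultimately show ?thesis
    using K_grp_iff qnorm2_1 by blast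
qed

lemma Sp_same_last_column_K:
  assumes z: "z \<in> Sp (Suc n)" and y: "y \<in> Sp (Suc n)"
    and col: "\<And>i. i < Suc n \<Longrightarrow> z i n = y i n"
  obtains k where "k \<in> K_grp n" "qmat_mult (Suc n) z (qadj k) = y"
proof -
  define k where "k = qmat_mult (Suc n) (qadj y) z"
  have "k i n = qmat_mult (Suc n) (qadj y) y i n" for i
    unfolding k_def qmat_mult_def by (rule sum.cong) (simp_all add: col)
  moreover have "qmat_mult (Suc n) (qadj y) y = qid (Suc n)"
    using y by (simp add: Sp_def)
  ultimately have "k \<in> K_grp n"
    using y z by (intro Sp_fixing_last_basis_vector_in_K) (simp_all add: k_def qmat_mult_in_Sp qadj_in_Sp)
  moreover have "qmat_mult (Suc n) z (qadj k) = y"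
    using y z
    by (simp add: k_def qadj_qmat_mult Sp_def qmat_mult_assoc[symmetric] qmat_mult_qid_left)
  ultimately show ?thesis
    using that by blast
qed

section \<open>Double cosets N x K\<close>

lemma double_coset_iff_last_column_norms:
  assumes n: "n \<ge> 1" and x: "x \<in> Sp (Suc n)" and y: "y \<in> Sp (Suc n)"
  shows "(\<exists>h\<in>N_grp n. \<exists>k\<in>K_grp n. y = qmat_mult (Suc n) (qmat_mult (Suc n) h x) (qadj k))
    \<longleftrightarrow> v0_norm n x = v0_norm n y \<and> vn_norm n x = vn_norm n y \<and> vlast_norm n x = vlast_norm n y"
proof
  assume "\<exists>h\<in>N_grp n. \<exists>k\<in>K_grp n. y = qmat_mult (Suc n) (qmat_mult (Suc n) h x) (qadj k)"
  then show "v0_norm n x = v0_norm n y \<and> vn_norm n x = vn_norm n y \<and> vlast_norm n x = vlast_norm n y"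
    using last_column_norms_N_K_invariant[OF n] by metis
next
  assume "v0_norm n x = v0_norm n y \<and> vn_norm n x = vn_norm n y \<and> vlast_norm n x = vlast_norm n y"
  then obtain h where h: "h \<in> N_grp n"
    and col: "\<And>i. i < Suc n \<Longrightarrow> qmat_mult (Suc n) h x i n = y i n"
    using N_transitive_on_last_column[OF n] by blast
  have "qmat_mult (Suc n) h x \<in> Sp (Suc n)"
    using h N_grp_subset_Sp[OF n] x by (auto intro: qmat_mult_in_Sp)
  then obtain k where "k \<in> K_grp n" "qmat_mult (Suc n) (qmat_mult (Suc n) h x) (qadj k) = y"
    using Sp_same_last_column_K y col by blast
  then show "\<exists>h\<in>N_grp n. \<exists>k\<in>K_grp n. y = qmat_mult (Suc n) (qmat_mult (Suc n) h x) (qadj k)"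
    using h by metis
qed

lemma same_orbit_iff_double_coset:
  assumes n: "n \<ge> 1"
    and g: "g1 \<in> Sp (Suc n)" "g2 \<in> Sp (Suc n)" "h1 \<in> Sp (Suc n)" "h2 \<in> Sp (Suc n)"
  shows "same_orbit n (g1, g2) (h1, h2) \<longleftrightarrow> (\<exists>h\<in>N_grp n. \<exists>k\<in>K_grp n.
      qmat_mult (Suc n) (qadj h2) h1
        = qmat_mult (Suc n) (qmat_mult (Suc n) h (qmat_mult (Suc n) (qadj g2) g1)) (qadj k))"
  (is "_ \<longleftrightarrow> (\<exists>h\<in>_. \<exists>k\<in>_. ?y = ?coset h k)")
proof
  assume "same_orbit n (g1, g2) (h1, h2)"
  then obtain g k h where gSp: "g \<in> Sp (Suc n)" and k: "k \<in> K_grp n" and h: "h \<in> N_grp n"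
    and h1: "h1 = qmat_mult (Suc n) (qmat_mult (Suc n) g g1) (qadj k)"
    and h2: "h2 = qmat_mult (Suc n) (qmat_mult (Suc n) g g2) (qadj h)"
    unfolding same_orbit_def by auto
  have g1q: "is_qmat (Suc n) g1"
    using g(1) by (rule Sp_is_qmat)
  have kq: "is_qmat (Suc n) k"
    using k K_grp_subset_Sp Sp_is_qmat by blast
  have "?y = ?coset h k"
    unfolding h1 h2
    by (simp add: qadj_qmat_mult qmat_mult_assoc Sp_qadj_mult_cancel gSp is_qmat_qmat_mult
        is_qmat_qadj g1q kq)
  then show "\<exists>h\<in>N_grp n. \<exists>k\<in>K_grp n. ?y = ?coset h k"
    using h k by blast
next
  assume "\<exists>h\<in>N_grp n. \<exists>k\<in>K_grp n. ?y = ?coset h k"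
  then obtain h k where h: "h \<in> N_grp n" and k: "k \<in> K_grp n" and hk: "?y = ?coset h k"
    by blast
  have hSp: "h \<in> Sp (Suc n)"
    using h N_grp_subset_Sp[OF n] by blast
  have hq: "is_qmat (Suc n) h" and h1q: "is_qmat (Suc n) h1" and h2q: "is_qmat (Suc n) h2"
    using hSp g by (simp_all add: Sp_is_qmat)
  define g where "g = qmat_mult (Suc n) (qmat_mult (Suc n) h2 h) (qadj g2)"
  have "qmat_mult (Suc n) (qmat_mult (Suc n) g g1) (qadj k) = qmat_mult (Suc n) h2 (?coset h k)"
    by (simp add: g_def qmat_mult_assoc)
  also have "\<dots> = h1"
    unfolding hk[symmetric] by (rule Sp_mult_qadj_cancel[OF g(4) h1q])
  finally have "h1 = qmat_mult (Suc n) (qmat_mult (Suc n) g g1) (qadj k)" ..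
  moreover have "h2 = qmat_mult (Suc n) (qmat_mult (Suc n) g g2) (qadj h)"
  proof -
    have "qmat_mult (Suc n) (qmat_mult (Suc n) g g2) (qadj h) = qmat_mult (Suc n) h2
        (qmat_mult (Suc n) h (qmat_mult (Suc n) (qadj g2) (qmat_mult (Suc n) g2 (qadj h))))"
      by (simp add: g_def qmat_mult_assoc)
    also have "\<dots> = qmat_mult (Suc n) h2 (qmat_mult (Suc n) h (qadj h))"
      by (simp add: Sp_qadj_mult_cancel[OF g(2)] is_qmat_qadj hq)
    also have "\<dots> = h2"
      using hSp by (simp add: Sp_def qmat_mult_qid_right h2q)
    finally show ?thesis ..
  qed
  moreover have "g \<in> Sp (Suc n)"
    using g hSp by (simp add: g_def qmat_mult_in_Sp qadj_in_Sp)
  ultimately show "same_orbit n (g1, g2) (h1, h2)"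
    unfolding same_orbit_def using h k by auto
qed

theorem proposition2p5:
  fixes n :: nat and g1 g2 h1 h2 :: qmat
  assumes "n \<ge> 2"
    and "g1 \<in> Sp (n+1)" "g2 \<in> Sp (n+1)" "h1 \<in> Sp (n+1)" "h2 \<in> Sp (n+1)"
  shows "same_orbit n (g1, g2) (h1, h2) \<longleftrightarrow>
    (let x = qmat_mult (n+1) (qadj g2) g1; y = qmat_mult (n+1) (qadj h2) h1 in
      v0_norm n x = v0_norm n y \<and> vn_norm n x = vn_norm n y \<and> vlast_norm n x = vlast_norm n y)"
proof -
  have n: "n \<ge> 1"
    using assms(1) by simp
  have g: "g1 \<in> Sp (Suc n)" "g2 \<in> Sp (Suc n)" "h1 \<in> Sp (Suc n)" "h2 \<in> Sp (Suc n)"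
    using assms(2-5) by simp_all
  have x: "qmat_mult (Suc n) (qadj g2) g1 \<in> Sp (Suc n)"
    and y: "qmat_mult (Suc n) (qadj h2) h1 \<in> Sp (Suc n)"
    using g by (simp_all add: qmat_mult_in_Sp qadj_in_Sp)
  show ?thesis
    using same_orbit_iff_double_coset[OF n g] double_coset_iff_last_column_norms[OF n x y]
    by (simp add: Let_def)
qed

end
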